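(* For every $k\ge 0$, $\mathbf F_{k+1}=\mathbf T\,\mathbf F_k$; that is, for every $a$-subset $I$ of $[-b,a-1]$, $\mathbf F_{k+1}[I]=\sum_J \mathbf T[I,J]\,\mathbf F_k[J]$, the sum running over all $a$-subsets $J$ of $[-b,a-1]$.
   Context: Let $S$ be a finite set of integers with $a:=\max S\ge 1$ and $b:=-\min S\ge 1$. Each $s\in S$ carries a weight $\omega_s$ in a field $K$ of characteristic $0$; set $\omega_s:=0$ for $s\in\mathbb Z\setminus S$, and for $s\in\mathbb Z$ put $\beta_s:=\delta_{s,0}-\omega_s$. Notation: $[m,n]:=\{i\in\mathbb Z: m\le i\le n\}$, $\mathbb N=\{0,1,2,\dots\}$, $\mathbb N_{\ge n}:=\{i\in\mathbb Z:i\ge n\}$, $X+c:=\{x+c:x\in X\}$; an $n$-subset is a subset of cardinality $n$. Given an integer $c$ and a finite set $I\subseteq\{i\in\mathbb Z:i<c\}$, an $(I,c)$-permutation of order $k\ge0$ is a bijection $\sigma:\mathbb N\to I\cup\mathbb N_{\ge c}$ with $\sigma(n)=n$ for all $n\ge k$; its number of inversions is $\mathrm{inv}(\sigma)=\#\{(i,j)\in\mathbb N^2:i<j,\ \sigma(i)>\sigma(j)\}$ and its signature is $\epsilon(\sigma)=(-1)^{\mathrm{inv}(\sigma)}$. For an $a$-subset $I$ of $[-b,a-1]$, $\mathfrak S_k^{(I)}$ denotes the (finite) set of $(I,a)$-permutations of order $k$, and for $\sigma\in\mathfrak S_k^{(I)}$, $\beta(\sigma):=\epsilon(\sigma)\prod_{i=0}^{k-1}\beta_{\sigma(i)-i}$.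 $\mathbf F_k$ is the vector indexed by the $a$-subsets of $[-b,a-1]$ with $\mathbf F_k[I]:=\sum_{\sigma\in\mathfrak S_k^{(I)}}\beta(\sigma)$. For a finite set $I\subseteq\mathbb Z$ and $s\in\mathbb Z$, $\epsilon_s(I):=(-1)^{\#\{i\in I:\ i<s\}}$. $\mathbf T$ is the square matrix with rows and columns indexed by the $a$-subsets of $[-b,a-1]$ and entries $\mathbf T[I,J]:=\epsilon_s(I)\beta_s$ if there is an integer $s$ with $I\cup\{a\}=(J+1)\cup\{s\}$ (such $s$ is then unique), and $\mathbf T[I,J]:=0$ otherwise. *)

theory Defs
  imports Main
begin

definition omega :: "int set \<Rightarrow> (int \<Rightarrow> 'k::field_char_0) \<Rightarrow> int \<Rightarrow> 'k" where
  "omega S w s = (if s \<in> S then w s else 0)"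

definition beta :: "int set \<Rightarrow> (int \<Rightarrow> 'k::field_char_0) \<Rightarrow> int \<Rightarrow> 'k" where
  "beta S w s = (if s = 0 then 1 else 0) - omega S w s"

definition Icperm :: "int set \<Rightarrow> int \<Rightarrow> nat \<Rightarrow> (nat \<Rightarrow> int) \<Rightarrow> bool" where
  "Icperm I c k \<sigma> \<longleftrightarrow> bij_betw \<sigma> UNIV (I \<union> {c..}) \<and> (\<forall>n\<ge>k. \<sigma> n = int n)"

definition inv_count :: "(nat \<Rightarrow> int) \<Rightarrow> nat" where
  "inv_count \<sigma> = card {(i, j). i < j \<and> \<sigma> i > \<sigma> j}"

definition sgn_perm :: "(nat \<Rightarrow> int) \<Rightarrow> 'k::field_char_0" where
  "sgn_perm \<sigma> = (-1) ^ inv_count \<sigma>"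

definition beta_perm :: "int set \<Rightarrow> (int \<Rightarrow> 'k::field_char_0) \<Rightarrow> nat \<Rightarrow> (nat \<Rightarrow> int) \<Rightarrow> 'k" where
  "beta_perm S w k \<sigma> = sgn_perm \<sigma> * (\<Prod>i<k. beta S w (\<sigma> i - int i))"

definition amax :: "int set \<Rightarrow> int" where "amax S = Max S"
definition bmin :: "int set \<Rightarrow> int" where "bmin S = - Min S"

definition Fvec :: "int set \<Rightarrow> (int \<Rightarrow> 'k::field_char_0) \<Rightarrow> nat \<Rightarrow> int set \<Rightarrow> 'k" where
  "Fvec S w k I = (\<Sum>\<sigma>\<in>{\<sigma>. Icperm I (amax S) k \<sigma>}. beta_perm S w k \<sigma>)"

definition eps_s :: "int \<Rightarrow> int set \<Rightarrow> 'k::field_char_0" where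
  "eps_s s I = (-1) ^ card {i\<in>I. i < s}"

definition Tmat :: "int set \<Rightarrow> (int \<Rightarrow> 'k::field_char_0) \<Rightarrow> int set \<Rightarrow> int set \<Rightarrow> 'k" where
  "Tmat S w I J =
     (if \<exists>s. insert (amax S) I = (\<lambda>x. x + 1) ` J \<union> {s}
      then (let s = THE s. insert (amax S) I = (\<lambda>x. x + 1) ` J \<union> {s}
            in eps_s s I * beta S w s)
      else 0)"

definition asubsets :: "int set \<Rightarrow> int set set" where
  "asubsets S = {I. I \<subseteq> {- bmin S .. amax S - 1} \<and> card I = nat (amax S)}"

end

theory Submission
  imports Defs "HOL-Library.FuncSet"
begin

text \<open>Split an (I,a)-permutation \<sigma> of order k+1 into its first value s = \<sigma>(0) and the
tail n \<mapsto> \<sigma>(n+1) - 1. When s \<in> I \<union> {a}, the tail is a (J,a)-permutation of order k with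
I \<union> {a} = (J+1) \<union> {s}, and this is a bijection. The inversions of \<sigma> involving position 0
are exactly the elements of I below s, so \<epsilon>(\<sigma>) = \<epsilon>_s(I) \<epsilon>(tail), while the factor
\<beta>_{\<sigma>(0)} = \<beta>_s; hence \<beta>(\<sigma>) = T[I,J] \<beta>(tail). All other \<sigma> contribute 0: if s > a, or if
J leaves [-b,a-1], some factor \<beta>_{\<sigma>(i)-i} has its index outside [-b,a] \ {0}.\<close>

lemma Icperm_inj: "Icperm I c k \<sigma> \<Longrightarrow> inj \<sigma>"
  unfolding Icperm_def bij_betw_def by blast

lemma Icperm_fixed: "Icperm I c k \<sigma> \<Longrightarrow> k \<le> n \<Longrightarrow> \<sigma> n = int n"
  unfolding Icperm_def by blast

lemma Icperm_image: "Icperm I c k \<sigma> \<Longrightarrow> range \<sigma> = I \<union> {c..}"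
  unfolding Icperm_def bij_betw_def by blast

lemma Icperm_in_range: "Icperm I c k \<sigma> \<Longrightarrow> \<sigma> n \<in> I \<union> {c..}"
  using Icperm_image by blast

lemma Icperm_less_order:
  assumes "Icperm I c k \<sigma>" "n < k" shows "\<sigma> n < int k"
proof (rule ccontr)
  assume "\<not> \<sigma> n < int k"
  hence ge: "\<sigma> n \<ge> int k" by simp
  define m where "m = nat (\<sigma> n)"
  have "k \<le> m" using ge unfolding m_def by linarith
  hence "\<sigma> m = int m" using Icperm_fixed[OF assms(1)] by blast
  also have "int m = \<sigma> n" using ge unfolding m_def by simp
  finally have "m = n" using Icperm_inj[OF assms(1)] by (simp add: inj_eq)
  thus False using \<open>k \<le> m\<close> assms(2) by simp
qed

lemma finite_Icperm:
  assumes "finite I" shows "finite {\<sigma>. Icperm I c k \<sigma>}"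
proof -
  let ?ext = "\<lambda>f::nat\<Rightarrow>int. \<lambda>n. if n < k then f n else int n"
  have "{\<sigma>. Icperm I c k \<sigma>} \<subseteq> ?ext ` ({..<k} \<rightarrow>\<^sub>E (I \<union> {c..<int k}))"
  proof
    fix \<sigma> assume "\<sigma> \<in> {\<sigma>. Icperm I c k \<sigma>}"
    hence P: "Icperm I c k \<sigma>" by simp
    have "restrict \<sigma> {..<k} \<in> {..<k} \<rightarrow>\<^sub>E (I \<union> {c..<int k})"
      using Icperm_in_range[OF P] Icperm_less_order[OF P] by auto
    moreover have "\<sigma> = ?ext (restrict \<sigma> {..<k})"
      using Icperm_fixed[OF P] by (auto simp: fun_eq_iff)
    ultimately show "\<sigma> \<in> ?ext ` ({..<k} \<rightarrow>\<^sub>E (I \<union> {c..<int k}))" by blast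
  qed
  moreover have "finite ({..<k} \<rightarrow>\<^sub>E (I \<union> {c..<int k}))"
    using assms by (intro finite_PiE) auto
  ultimately show ?thesis by (meson finite_subset finite_imageI)
qed

lemma inversions_subset_order:
  assumes "Icperm I c k \<sigma>"
  shows "{(i, j). i < j \<and> \<sigma> i > \<sigma> j} \<subseteq> {..<k} \<times> {..<k}"
proof
  fix p assume "p \<in> {(i, j). i < j \<and> \<sigma> i > \<sigma> j}"
  then obtain i j where p: "p = (i, j)" "i < j" "\<sigma> i > \<sigma> j" by blast
  have "j < k"
  proof (rule ccontr)
    assume "\<not> j < k"
    hence j: "\<sigma> j = int j" "k \<le> j" using Icperm_fixed[OF assms] by simp_all
    have "i < k"
    proof (rule ccontr)
      assume "\<not> i < k"
      thus False using p j Icperm_fixed[OF assms, of i] by simp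
    qed
    thus False using Icperm_less_order[OF assms] p j by fastforce
  qed
  thus "p \<in> {..<k} \<times> {..<k}" using p by simp
qed

lemma finite_inversions: "Icperm I c k \<sigma> \<Longrightarrow> finite {(i, j). i < j \<and> \<sigma> i > \<sigma> j}"
  using inversions_subset_order by (meson finite_SigmaI finite_lessThan finite_subset)

subsection \<open>Splitting off the first value\<close>

definition perm_tl :: "(nat \<Rightarrow> int) \<Rightarrow> nat \<Rightarrow> int" where
  "perm_tl \<sigma> n = \<sigma> (Suc n) - 1"

definition perm_cons :: "int \<Rightarrow> (nat \<Rightarrow> int) \<Rightarrow> nat \<Rightarrow> int" where
  "perm_cons s \<tau> n = (if n = 0 then s else \<tau> (n - 1) + 1)"

definition tail_set :: "int \<Rightarrow> int set \<Rightarrow> int \<Rightarrow> int set" where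
  "tail_set c I s = (\<lambda>x. x - 1) ` (insert c I - {s})"

lemma perm_cons_0 [simp]: "perm_cons s \<tau> 0 = s"
  by (simp add: perm_cons_def)

lemma perm_cons_perm_tl: "perm_cons (\<sigma> 0) (perm_tl \<sigma>) = \<sigma>"
  by (auto simp: fun_eq_iff perm_cons_def perm_tl_def not0_implies_Suc)

lemma perm_tl_perm_cons: "perm_tl (perm_cons s \<tau>) = \<tau>"
  by (auto simp: fun_eq_iff perm_cons_def perm_tl_def)

lemma insert_eq_shift_tail_set:
  "s \<in> insert c I \<Longrightarrow> insert c I = (\<lambda>x. x + 1) ` tail_set c I s \<union> {s}"
  by (auto simp: tail_set_def image_image)

lemma notin_shift_tail_set: "s \<notin> (\<lambda>x. x + 1) ` tail_set c I s"
  by (auto simp: tail_set_def image_image)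

lemma tail_set_eqI:
  assumes "insert c I = (\<lambda>x. x + 1) ` J \<union> {s}" "s \<notin> (\<lambda>x. x + 1) ` J"
  shows "tail_set c I s = J"
proof -
  have "insert c I - {s} = (\<lambda>x. x + 1) ` J" using assms by blast
  thus ?thesis by (simp add: tail_set_def image_image)
qed

lemma card_tail_set:
  assumes "finite I" "c \<notin> I" "s \<in> insert c I"
  shows "card (tail_set c I s) = card I"
proof -
  have "card (tail_set c I s) = card (insert c I - {s})"
    unfolding tail_set_def by (rule card_image) (auto simp: inj_on_def)
  also have "\<dots> = card I" using assms by simp
  finally show ?thesis .
qed

lemma notin_shift_if_card_eq:
  fixes J :: "int set"
  assumes "insert c I = (\<lambda>x. x + 1) ` J \<union> {s}" "finite I" "c \<notin> I" "card J = card I"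
  shows "s \<notin> (\<lambda>x. x + 1) ` J"
proof
  assume "s \<in> (\<lambda>x. x + 1) ` J"
  hence "insert c I = (\<lambda>x. x + 1) ` J" using assms(1) by blast
  hence "card (insert c I) = card J" by (simp add: card_image inj_on_def)
  thus False using assms(2-4) by simp
qed

lemma Icperm_perm_tl:
  assumes P: "Icperm I c (Suc k) \<sigma>" and s0: "\<sigma> 0 \<in> insert c I" and Ilt: "\<forall>x\<in>I. x < c"
  shows "Icperm (tail_set c I (\<sigma> 0)) c k (perm_tl \<sigma>)"
proof -
  have inj: "inj \<sigma>" using Icperm_inj[OF P] .
  have img: "range \<sigma> = I \<union> {c..}" using Icperm_image[OF P] .
  have "inj (perm_tl \<sigma>)"
    by (rule injI) (use inj in \<open>auto simp: perm_tl_def inj_eq\<close>)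
  moreover have "range (perm_tl \<sigma>) = tail_set c I (\<sigma> 0) \<union> {c..}"
  proof (intro equalityI subsetI)
    fix y assume "y \<in> range (perm_tl \<sigma>)"
    then obtain n where y: "y = \<sigma> (Suc n) - 1" by (auto simp: perm_tl_def)
    have "\<sigma> (Suc n) \<noteq> \<sigma> 0" using inj by (auto simp: inj_eq)
    moreover have "\<sigma> (Suc n) \<in> I \<union> {c..}" using img by blast
    ultimately show "y \<in> tail_set c I (\<sigma> 0) \<union> {c..}"
      using y by (cases "\<sigma> (Suc n) \<in> insert c I") (auto simp: tail_set_def)
  next
    fix y assume y: "y \<in> tail_set c I (\<sigma> 0) \<union> {c..}"
    have "\<sigma> 0 \<le> c" using s0 Ilt by auto
    hence "y + 1 \<in> I \<union> {c..}" "y + 1 \<noteq> \<sigma> 0" using y by (auto simp: tail_set_def)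
    then obtain n where n: "\<sigma> n = y + 1" "n \<noteq> 0" using img by (metis rangeE)
    then obtain m where "n = Suc m" using not0_implies_Suc by blast
    hence "perm_tl \<sigma> m = y" using n by (simp add: perm_tl_def)
    thus "y \<in> range (perm_tl \<sigma>)" by (metis rangeI)
  qed
  moreover have "\<forall>n\<ge>k. perm_tl \<sigma> n = int n"
    using Icperm_fixed[OF P] by (auto simp: perm_tl_def)
  ultimately show ?thesis unfolding Icperm_def bij_betw_def by blast
qed

lemma Icperm_perm_cons:
  assumes P: "Icperm J c k \<tau>" and eqs: "insert c I = (\<lambda>x. x + 1) ` J \<union> {s}"
    and sn: "s \<notin> (\<lambda>x. x + 1) ` J" and Ilt: "\<forall>x\<in>I. x < c"
  shows "Icperm I c (Suc k) (perm_cons s \<tau>)"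
proof -
  have inj: "inj \<tau>" using Icperm_inj[OF P] .
  have img: "range \<tau> = J \<union> {c..}" using Icperm_image[OF P] .
  have "s \<in> insert c I" using eqs by blast
  hence "s \<le> c" using Ilt by auto
  hence s_new: "\<tau> n + 1 \<noteq> s" for n
    using sn Icperm_in_range[OF P, of n] by force
  have "inj (perm_cons s \<tau>)"
  proof (rule injI)
    fix m n assume h: "perm_cons s \<tau> m = perm_cons s \<tau> n"
    show "m = n"
      using h s_new inj by (cases m; cases n) (auto simp: perm_cons_def inj_eq)
  qed
  moreover have "range (perm_cons s \<tau>) = I \<union> {c..}"
  proof (intro equalityI subsetI)
    fix y assume "y \<in> range (perm_cons s \<tau>)"
    then obtain n where y: "y = perm_cons s \<tau> n" by blast
    show "y \<in> I \<union> {c..}"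
    proof (cases n)
      case 0 thus ?thesis using y eqs by auto
    next
      case (Suc m)
      thus ?thesis using y eqs Icperm_in_range[OF P, of m] by (auto simp: perm_cons_def)
    qed
  next
    fix y assume y: "y \<in> I \<union> {c..}"
    show "y \<in> range (perm_cons s \<tau>)"
    proof (cases "y = s")
      case True thus ?thesis by (metis perm_cons_0 rangeI)
    next
      case False
      have "y - 1 \<in> J \<union> {c..}"
        using False eqs y by (cases "y \<in> insert c I") force+
      then obtain m where "\<tau> m = y - 1" using img by (metis rangeE)
      hence "perm_cons s \<tau> (Suc m) = y" by (simp add: perm_cons_def)
      thus ?thesis by (metis rangeI)
    qed
  qed
  moreover have "\<forall>n\<ge>Suc k. perm_cons s \<tau> n = int n"
    using Icperm_fixed[OF P] by (auto simp: perm_cons_def)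
  ultimately show ?thesis unfolding Icperm_def bij_betw_def by blast
qed

lemma bij_betw_perm_tl:
  assumes "finite I" "\<forall>x\<in>I. x < c"
  shows "bij_betw (\<lambda>\<sigma>. (tail_set c I (\<sigma> 0), perm_tl \<sigma>))
    {\<sigma>. Icperm I c (Suc k) \<sigma> \<and> \<sigma> 0 \<in> insert c I \<and> tail_set c I (\<sigma> 0) \<subseteq> R}
    {(J, \<tau>). J \<subseteq> R \<and> card J = card I \<and> Icperm J c k \<tau>
              \<and> (\<exists>s. insert c I = (\<lambda>x. x + 1) ` J \<union> {s})}"
    (is "bij_betw ?f ?A ?B")
proof -
  have cI: "c \<notin> I" using assms(2) by auto
  have "inj_on ?f ?A"
  proof (rule inj_onI)
    fix \<sigma> \<sigma>' assume "\<sigma> \<in> ?A" "\<sigma>' \<in> ?A" and eq: "?f \<sigma> = ?f \<sigma>'"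
    hence "\<sigma> 0 \<in> (\<lambda>x. x + 1) ` tail_set c I (\<sigma>' 0) \<union> {\<sigma>' 0}"
      using insert_eq_shift_tail_set by blast
    hence "\<sigma> 0 = \<sigma>' 0" using eq notin_shift_tail_set[of "\<sigma> 0" c I] by auto
    thus "\<sigma> = \<sigma>'" using eq perm_cons_perm_tl by (metis prod.inject)
  qed
  moreover have "?f ` ?A = ?B"
  proof (intro equalityI subsetI)
    fix p assume "p \<in> ?f ` ?A"
    then obtain \<sigma> where "p = ?f \<sigma>" "\<sigma> \<in> ?A" by blast
    thus "p \<in> ?B"
      using Icperm_perm_tl[of I c k \<sigma>] insert_eq_shift_tail_set[of "\<sigma> 0" c I]
        card_tail_set[OF assms(1) cI] assms(2) by auto
  next
    fix p assume "p \<in> ?B"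
    then obtain J \<tau> s where p: "p = (J, \<tau>)" and J: "J \<subseteq> R" "card J = card I"
      and \<tau>: "Icperm J c k \<tau>" and eqs: "insert c I = (\<lambda>x. x + 1) ` J \<union> {s}" by blast
    have sn: "s \<notin> (\<lambda>x. x + 1) ` J"
      by (rule notin_shift_if_card_eq[OF eqs assms(1) cI J(2)])
    have J_eq: "tail_set c I s = J" by (rule tail_set_eqI[OF eqs sn])
    have "perm_cons s \<tau> \<in> ?A"
      using Icperm_perm_cons[OF \<tau> eqs sn assms(2)] eqs J J_eq by auto
    moreover have "p = ?f (perm_cons s \<tau>)" using p J_eq by (simp add: perm_tl_perm_cons)
    ultimately show "p \<in> ?f ` ?A" by blast
  qed
  ultimately show ?thesis by (simp add: bij_betw_def)
qed

lemma inv_count_perm_tl: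
  assumes P: "Icperm I c (Suc k) \<sigma>" and sc: "\<sigma> 0 \<le> c"
  shows "inv_count \<sigma> = card {i\<in>I. i < \<sigma> 0} + inv_count (perm_tl \<sigma>)"
proof -
  define X where "X = {(i, j). i < j \<and> \<sigma> i > \<sigma> j}"
  define Y where "Y = {(i, j). i < j \<and> perm_tl \<sigma> i > perm_tl \<sigma> j}"
  define B where "B = {j. 0 < j \<and> \<sigma> j < \<sigma> 0}"
  have X_split: "X = Pair (0::nat) ` B \<union> map_prod Suc Suc ` Y"
  proof (intro equalityI subsetI)
    fix p assume "p \<in> X"
    then obtain i j where p: "p = (i, j)" "i < j" "\<sigma> j < \<sigma> i" by (auto simp: X_def)
    show "p \<in> Pair (0::nat) ` B \<union> map_prod Suc Suc ` Y"
    proof (cases i)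
      case 0 thus ?thesis using p by (auto simp: B_def)
    next
      case (Suc i')
      then obtain j' where "j = Suc j'" using p(2) by (cases j) auto
      hence "(i', j') \<in> Y" using p Suc by (auto simp: Y_def perm_tl_def)
      thus ?thesis using p Suc \<open>j = Suc j'\<close> by (auto intro: rev_image_eqI)
    qed
  qed (auto simp: X_def Y_def perm_tl_def B_def)
  have "finite X" using finite_inversions[OF P] by (simp add: X_def)
  hence fin: "finite (Pair (0::nat) ` B)" "finite (map_prod Suc Suc ` Y)"
    unfolding X_split by simp_all
  have below_first: "\<sigma> ` B = {i\<in>I. i < \<sigma> 0}"
  proof (intro equalityI subsetI)
    fix x assume "x \<in> \<sigma> ` B"
    then obtain j where "x = \<sigma> j" "\<sigma> j < \<sigma> 0" by (auto simp: B_def)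
    thus "x \<in> {i\<in>I. i < \<sigma> 0}" using Icperm_in_range[OF P, of j] sc by auto
  next
    fix x assume x: "x \<in> {i\<in>I. i < \<sigma> 0}"
    then obtain j where j: "\<sigma> j = x" using Icperm_image[OF P] by (metis UnI1 mem_Collect_eq rangeE)
    hence "j \<noteq> 0" using x by (cases j) auto
    hence "j \<in> B" using j x by (simp add: B_def)
    thus "x \<in> \<sigma> ` B" using j by blast
  qed
  have "card B = card {i\<in>I. i < \<sigma> 0}"
    using below_first Icperm_inj[OF P] by (metis card_image inj_on_subset subset_UNIV)
  moreover have "card (Pair (0::nat) ` B) = card B" by (rule card_image) (auto simp: inj_on_def)
  moreover have "card (map_prod Suc Suc ` Y) = card Y" by (rule card_image) (auto simp: inj_on_def)
  moreover have "card X = card (Pair (0::nat) ` B) + card (map_prod Suc Suc ` Y)"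
    unfolding X_split by (rule card_Un_disjoint[OF fin]) auto
  ultimately have "card X = card {i\<in>I. i < \<sigma> 0} + card Y" by simp
  thus ?thesis by (simp add: inv_count_def X_def Y_def)
qed

lemma beta_perm_Suc:
  assumes "Icperm I c (Suc k) \<sigma>" "\<sigma> 0 \<le> c"
  shows "beta_perm S w (Suc k) \<sigma> = eps_s (\<sigma> 0) I * beta S w (\<sigma> 0) * beta_perm S w k (perm_tl \<sigma>)"
proof -
  have "sgn_perm \<sigma> = (eps_s (\<sigma> 0) I :: 'a) * sgn_perm (perm_tl \<sigma>)"
    unfolding sgn_perm_def eps_s_def inv_count_perm_tl[OF assms] by (simp add: power_add)
  moreover have "(\<Prod>i<Suc k. beta S w (\<sigma> i - int i)) =
      beta S w (\<sigma> 0) * (\<Prod>i<k. beta S w (perm_tl \<sigma> i - int i))"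
    by (subst prod.lessThan_Suc_shift) (simp add: perm_tl_def algebra_simps)
  ultimately show ?thesis by (simp add: beta_perm_def)
qed

lemma Tmat_eq:
  assumes "insert (amax S) I = (\<lambda>x. x + 1) ` J \<union> {s}" "s \<notin> (\<lambda>x. x + 1) ` J"
  shows "Tmat S w I J = eps_s s I * beta S w s"
proof -
  have "(THE t. insert (amax S) I = (\<lambda>x. x + 1) ` J \<union> {t}) = s"
    using assms by (intro the_equality) blast+
  thus ?thesis using assms(1) by (auto simp: Tmat_def Let_def)
qed

lemma Tmat_eq_0:
  "\<nexists>s. insert (amax S) I = (\<lambda>x. x + 1) ` J \<union> {s} \<Longrightarrow> Tmat S w I J = 0"
  by (simp add: Tmat_def)

lemma beta_perm_Suc_eq_Tmat_mult:
  assumes "Icperm I (amax S) (Suc k) \<sigma>" "\<sigma> 0 \<in> insert (amax S) I" "\<forall>x\<in>I. x < amax S"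
  shows "beta_perm S w (Suc k) \<sigma> =
    Tmat S w I (tail_set (amax S) I (\<sigma> 0)) * beta_perm S w k (perm_tl \<sigma>)"
proof -
  have "\<sigma> 0 \<le> amax S" using assms(2,3) by auto
  hence "beta_perm S w (Suc k) \<sigma> =
      eps_s (\<sigma> 0) I * beta S w (\<sigma> 0) * beta_perm S w k (perm_tl \<sigma>)"
    by (rule beta_perm_Suc[OF assms(1)])
  also have "eps_s (\<sigma> 0) I * beta S w (\<sigma> 0) = Tmat S w I (tail_set (amax S) I (\<sigma> 0))"
    by (rule Tmat_eq[OF insert_eq_shift_tail_set[OF assms(2)] notin_shift_tail_set, symmetric])
  finally show ?thesis .
qed

subsection \<open>Vanishing terms\<close>

lemma beta_eq_0_outside:
  assumes "finite S" "x \<noteq> 0" "x > Max S \<or> x < Min S"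
  shows "beta S w x = 0"
proof -
  have "x \<notin> S" using assms Max_ge[OF assms(1), of x] Min_le[OF assms(1), of x] by linarith
  thus ?thesis using assms(2) by (simp add: beta_def omega_def)
qed

lemma beta_perm_Suc_eq_0:
  assumes P: "Icperm I (amax S) (Suc k) \<sigma>" and S: "finite S" "amax S \<ge> 1" "bmin S \<ge> 1"
    and I: "I \<subseteq> {- bmin S..amax S - 1}"
    and bad: "\<sigma> 0 \<notin> insert (amax S) I \<or> \<not> tail_set (amax S) I (\<sigma> 0) \<subseteq> {- bmin S..amax S - 1}"
  shows "beta_perm S w (Suc k) \<sigma> = 0"
proof -
  have aS: "amax S = Max S" and bS: "- bmin S = Min S" by (simp_all add: amax_def bmin_def)
  have "\<exists>i<Suc k. beta S w (\<sigma> i - int i) = 0"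
  proof (cases "\<sigma> 0 \<in> insert (amax S) I")
    case False
    hence "\<sigma> 0 > Max S" using Icperm_in_range[OF P, of 0] aS by auto
    hence "beta S w (\<sigma> 0 - int 0) = 0" using S(2) aS by (intro beta_eq_0_outside[OF S(1)]) auto
    thus ?thesis by blast
  next
    case True
    \<comment> \<open>some z \<in> I with z - 1 < -b is hit at a position m \<ge> 1, so \<sigma>(m) - m < -b\<close>
    with bad obtain z where z: "z \<in> insert (amax S) I" "z \<noteq> \<sigma> 0"
      "z - 1 \<notin> {- bmin S..amax S - 1}"
      unfolding tail_set_def by blast
    have zI: "z \<in> I" "z < 1 - bmin S" using z I S(2,3) by auto
    then obtain m where m: "\<sigma> m = z" using Icperm_image[OF P] by (metis UnI1 rangeE)
    have "m \<noteq> 0" using m z(2) by (cases m) auto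
    moreover have "m < Suc k"
    proof (rule ccontr)
      assume "\<not> m < Suc k"
      hence "\<sigma> m = int m" by (simp add: Icperm_fixed[OF P])
      thus False using m zI(2) S(3) by linarith
    qed
    moreover have "\<sigma> m - int m < Min S" using m zI(2) bS \<open>m \<noteq> 0\<close> by linarith
    hence "beta S w (\<sigma> m - int m) = 0"
      using m zI(2) S(3) by (intro beta_eq_0_outside[OF S(1)]) auto
    ultimately show ?thesis by blast
  qed
  hence "(\<Prod>i<Suc k. beta S w (\<sigma> i - int i)) = 0" by (intro prod_zero) auto
  thus ?thesis unfolding beta_perm_def by simp
qed

lemma Fvec_Suc_eq_sum_admissible:
  assumes S: "finite S" "amax S \<ge> 1" "bmin S \<ge> 1" and I: "I \<in> asubsets S"
  shows "Fvec S w (Suc k) I =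
    (\<Sum>\<sigma> | Icperm I (amax S) (Suc k) \<sigma> \<and> \<sigma> 0 \<in> insert (amax S) I
           \<and> tail_set (amax S) I (\<sigma> 0) \<subseteq> {- bmin S..amax S - 1}. beta_perm S w (Suc k) \<sigma>)"
proof -
  have I_sub: "I \<subseteq> {- bmin S..amax S - 1}" using I by (simp add: asubsets_def)
  hence "finite I" by (rule finite_subset) simp
  show ?thesis
    unfolding Fvec_def
  proof (rule sum.mono_neutral_right)
    show "finite {\<sigma>. Icperm I (amax S) (Suc k) \<sigma>}" by (rule finite_Icperm[OF \<open>finite I\<close>])
  qed (auto intro!: beta_perm_Suc_eq_0[OF _ S I_sub])
qed

lemma sum_Tmat_Fvec_eq_sum_compatible:
  assumes "I \<in> asubsets S"
  shows "(\<Sum>J\<in>asubsets S. Tmat S w I J * Fvec S w k J) =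
    (\<Sum>(J, \<tau>) | J \<subseteq> {- bmin S..amax S - 1} \<and> card J = card I \<and> Icperm J (amax S) k \<tau>
           \<and> (\<exists>s. insert (amax S) I = (\<lambda>x. x + 1) ` J \<union> {s}). Tmat S w I J * beta_perm S w k \<tau>)"
    (is "_ = sum _ ?compatible")
proof -
  let ?A = "asubsets S"
  have fin_A: "finite ?A" unfolding asubsets_def
    by (rule finite_subset[of _ "Pow {- bmin S..amax S - 1}"]) auto
  have fin_J: "finite J" if "J \<in> ?A" for J
    using that by (auto simp: asubsets_def intro: finite_subset)
  have "(\<Sum>J\<in>?A. Tmat S w I J * Fvec S w k J) =
      (\<Sum>(J, \<tau>)\<in>Sigma ?A (\<lambda>J. {\<tau>. Icperm J (amax S) k \<tau>}). Tmat S w I J * beta_perm S w k \<tau>)"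
    unfolding Fvec_def sum_distrib_left
    by (rule sum.Sigma) (use fin_A fin_J finite_Icperm in auto)
  also have "\<dots> = (\<Sum>(J, \<tau>)\<in>?compatible. Tmat S w I J * beta_perm S w k \<tau>)"
  proof (rule sum.mono_neutral_right)
    show "finite (Sigma ?A (\<lambda>J. {\<tau>. Icperm J (amax S) k \<tau>}))"
      using fin_A fin_J finite_Icperm by (intro finite_SigmaI) auto
    show "?compatible \<subseteq> Sigma ?A (\<lambda>J. {\<tau>. Icperm J (amax S) k \<tau>})"
      using assms by (auto simp: asubsets_def)
    show "\<forall>p\<in>Sigma ?A (\<lambda>J. {\<tau>. Icperm J (amax S) k \<tau>}) - ?compatible.
        (case p of (J, \<tau>) \<Rightarrow> Tmat S w I J * beta_perm S w k \<tau>) = 0"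
    proof
      fix p assume "p \<in> Sigma ?A (\<lambda>J. {\<tau>. Icperm J (amax S) k \<tau>}) - ?compatible"
      then obtain J \<tau> where "p = (J, \<tau>)" "\<nexists>s. insert (amax S) I = (\<lambda>x. x + 1) ` J \<union> {s}"
        using assms by (cases p) (auto simp: asubsets_def)
      thus "(case p of (J, \<tau>) \<Rightarrow> Tmat S w I J * beta_perm S w k \<tau>) = 0"
        by (simp add: Tmat_eq_0)
    qed
  qed
  finally show ?thesis .
qed

theorem mainTheorem3:
  fixes S :: "int set" and w :: "int \<Rightarrow> 'k::field_char_0" and k :: nat and I :: "int set"
  assumes "finite S" and "S \<noteq> {}" and "amax S \<ge> 1" and "bmin S \<ge> 1"
    and "I \<in> asubsets S"
  shows "Fvec S w (k + 1) I = (\<Sum>J\<in>asubsets S. Tmat S w I J * Fvec S w k J)"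
proof -
  let ?a = "amax S" and ?R = "{- bmin S..amax S - 1}"
  have I_sub: "I \<subseteq> ?R" using assms(5) by (simp add: asubsets_def)
  hence I_fin: "finite I" and I_less: "\<forall>x\<in>I. x < ?a" by (auto intro: finite_subset)
  have "Fvec S w (Suc k) I =
    (\<Sum>\<sigma> | Icperm I ?a (Suc k) \<sigma> \<and> \<sigma> 0 \<in> insert ?a I \<and> tail_set ?a I (\<sigma> 0) \<subseteq> ?R.
       Tmat S w I (tail_set ?a I (\<sigma> 0)) * beta_perm S w k (perm_tl \<sigma>))"
    unfolding Fvec_Suc_eq_sum_admissible[OF assms(1,3,4,5)]
    by (intro sum.cong refl) (use beta_perm_Suc_eq_Tmat_mult I_less in blast)
  also have "\<dots> = (\<Sum>(J, \<tau>) | J \<subseteq> ?R \<and> card J = card I \<and> Icperm J ?a k \<tau>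
      \<and> (\<exists>s. insert ?a I = (\<lambda>x. x + 1) ` J \<union> {s}). Tmat S w I J * beta_perm S w k \<tau>)"
    using sum.reindex_bij_betw[OF bij_betw_perm_tl[OF I_fin I_less],
        where g = "\<lambda>(J, \<tau>). Tmat S w I J * beta_perm S w k \<tau>"] by simp
  also have "\<dots> = (\<Sum>J\<in>asubsets S. Tmat S w I J * Fvec S w k J)"
    by (rule sum_Tmat_Fvec_eq_sum_compatible[OF assms(5), symmetric])
  finally show ?thesis by simp
qed

end
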